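(* For any integer $k\ge1$, no online algorithm achieves a competitive ratio better than $2\ln2$ for the online ATWC dispersion problem without boundary condition for arbitrary $k$-dimensional polytopes; i.e., there is no online algorithm that is $\sigma$-competitive with $\sigma<2\ln2$ for every $k$-dimensional polytope $P$.
   Context: Distances are Euclidean. For a polytope $P$ and $n\ge2$, $SP(n;P)=\max_{X_1,\dots,X_n\in P}\min_{i\ne j}dis(X_i,X_j)$. An instance is $S=((s_1,d_1),\dots,(s_n,d_n))$ with $s_i<d_i$, $0=s_1\le\dots\le s_n$; point $i$ is present at time $t$ iff $s_i\le t\le d_i$; $T=\max_id_i$. For $X\in P^n$, $d^{SP}_{min}(t;X)=\min dis(X_i,X_j)$ over present points $i\ne j$ at time $t$, and $OPT^{SP}_A(S;P)=\max_X\min_{t\le T}d^{SP}_{min}(t;X)$. In the online problem, upon arrival of each point the algorithm irrevocably chooses its location in $P$ without knowing future events or the number of points; an adaptive adversary chooses the events. An online algorithm is $\sigma$-competitive for $P$ if $OPT^{SP}_A(S;P)\le\sigma\min_{t\le T}d^{SP}_{min}(t;X)$ for every instance $S$ and its output $X$. *)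

theory Defs
  imports "HOL-Analysis.Analysis"
begin

text \<open>An instance is a list of (arrival, departure) pairs; point i is
  at index i of the list (0-based).\<close>

type_synonym dinst = "(real \<times> real) list"

definition valid_instance :: "dinst \<Rightarrow> bool" where
  "valid_instance S \<longleftrightarrow> S \<noteq> [] \<and> fst (S ! 0) = 0
     \<and> (\<forall>i < length S. fst (S ! i) < snd (S ! i))
     \<and> (\<forall>i j. i \<le> j \<longrightarrow> j < length S \<longrightarrow> fst (S ! i) \<le> fst (S ! j))"

definition present :: "dinst \<Rightarrow> nat \<Rightarrow> real \<Rightarrow> bool" where
  "present S i t \<longleftrightarrow> i < length S \<and> fst (S ! i) \<le> t \<and> t \<le> snd (S ! i)"

definition T_end :: "dinst \<Rightarrow> real" where
  "T_end S = Max (snd ` set S)"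

text \<open>Minimum distance among present points at time t (infinity if fewer than two present).\<close>
definition dmin :: "dinst \<Rightarrow> (nat \<Rightarrow> 'a::euclidean_space) \<Rightarrow> real \<Rightarrow> ereal" where
  "dmin S X t = (INF p \<in> {(i, j). i \<noteq> j \<and> present S i t \<and> present S j t}.
                    ereal (dist (X (fst p)) (X (snd p))))"

definition objective :: "dinst \<Rightarrow> (nat \<Rightarrow> 'a::euclidean_space) \<Rightarrow> ereal" where
  "objective S X = (INF t \<in> {..T_end S}. dmin S X t)"

definition OPT :: "dinst \<Rightarrow> 'a::euclidean_space set \<Rightarrow> ereal" where
  "OPT S P = (SUP X \<in> {X. \<forall>i < length S. X i \<in> P}. objective S X)"

text \<open>It is online for P if every location lies in P and
  the location of point i depends only on the information available at its arrival
  time: the arrival times of points 0..i and the departure times of earlier points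
  that have already departed (strictly before the arrival of i).\<close>

definition same_info :: "dinst \<Rightarrow> dinst \<Rightarrow> nat \<Rightarrow> bool" where
  "same_info S S' i \<longleftrightarrow> i < length S \<and> i < length S'
     \<and> (\<forall>j \<le> i. fst (S ! j) = fst (S' ! j))
     \<and> (\<forall>j < i. (snd (S ! j) < fst (S ! i) \<or> snd (S' ! j) < fst (S' ! i))
                 \<longrightarrow> snd (S ! j) = snd (S' ! j))"

definition online_alg :: "'a::euclidean_space set \<Rightarrow> (dinst \<Rightarrow> nat \<Rightarrow> 'a) \<Rightarrow> bool" where
  "online_alg P A \<longleftrightarrow>
     (\<forall>S. valid_instance S \<longrightarrow> (\<forall>i < length S. A S i \<in> P))
   \<and> (\<forall>S S' i. valid_instance S \<longrightarrow> valid_instance S' \<longrightarrow> same_info S S' i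
          \<longrightarrow> A S i = A S' i)"

definition competitive :: "real \<Rightarrow> 'a::euclidean_space set \<Rightarrow> (dinst \<Rightarrow> nat \<Rightarrow> 'a) \<Rightarrow> bool" where
  "competitive \<sigma> P A \<longleftrightarrow>
     (\<forall>S. valid_instance S \<longrightarrow> OPT S P \<le> ereal \<sigma> * objective S (A S))"

end

theory Submission
  imports Defs
begin

text \<open>The adversary lets all points arrive at time 0 and depart at time 1, so an online algorithm
  fixes positions \<open>x\<^sub>0, x\<^sub>1, \<dots>\<close> once and for all, yet is compared with the offline optimum on
  every prefix \<open>x\<^sub>0, \<dots>, x\<^sub>m\<close>. In a box that is long in one direction and arbitrarily thin in the
  others, \<open>m + 1\<close> equally spaced points on the long edge are \<open>1/m\<close> apart, so \<open>\<sigma>\<close>-competitiveness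
  forces the projections of \<open>x\<^sub>a\<close> and \<open>x\<^sub>b\<close> onto that edge to be roughly \<open>1/(\<sigma> max a b)\<close> apart.
  Sorting the first \<open>2n\<close> projections in \<open>[0, 1]\<close>, every index is the larger one of at most two
  neighbouring pairs, so the gaps sum to at least \<open>(2 (1/n + \<dots> + 1/(2n - 1)) - 1/n) / \<sigma>\<close>, which
  is at least \<open>(2 ln 2 - 1/n) / \<sigma>\<close>, while they sum to at most 1.\<close>

text \<open>Every element of a distinct list is the maximum of at most two adjacent pairs: the pair
  index is recovered from the maximum together with the side on which it sits.\<close>

lemma sum_adjacent_max_le:
  fixes h :: "nat \<Rightarrow> real"
  assumes "distinct L" "set L \<subseteq> {..<N}" "\<And>p. h p \<ge> 0"
  shows "(\<Sum>j<length L - 1. h (max (L ! j) (L ! Suc j))) \<le> 2 * (\<Sum>p<N. h p)"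
proof -
  define M where "M j = max (L ! j) (L ! Suc j)" for j
  define g where "g j = (M j, L ! j = M j)" for j
  have M: "M j = L ! j \<or> M j = L ! Suc j" for j by (simp add: M_def max_def)
  have inj: "inj_on g {..<length L - 1}"
  proof (rule inj_onI)
    fix j j' assume "j \<in> {..<length L - 1}" "j' \<in> {..<length L - 1}" and "g j = g j'"
    hence idx: "Suc j < length L" "Suc j' < length L"
      and "M j = M j'" "(L ! j = M j) \<longleftrightarrow> (L ! j' = M j')" by (auto simp: g_def)
    hence "L ! j = L ! j' \<or> L ! Suc j = L ! Suc j'" using M [of j] M [of j'] by metis
    thus "j = j'" using idx by (auto simp: nth_eq_iff_index_eq [OF assms(1)])
  qed
  have sub: "g ` {..<length L - 1} \<subseteq> {..<N} \<times> UNIV"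
  proof -
    have "M j < N" if "Suc j < length L" for j
    proof -
      have "L ! j \<in> set L" "L ! Suc j \<in> set L" using that by (auto intro!: nth_mem)
      thus ?thesis using M [of j] assms(2) by auto
    qed
    thus ?thesis by (auto simp: g_def)
  qed
  have "(\<Sum>j<length L - 1. h (M j)) = (\<Sum>s\<in>g ` {..<length L - 1}. h (fst s))"
    unfolding sum.reindex [OF inj] by (simp add: g_def)
  also have "\<dots> \<le> (\<Sum>s\<in>{..<N} \<times> (UNIV :: bool set). h (fst s))"
    by (rule sum_mono2) (use sub assms(3) in auto)
  also have "\<dots> = (\<Sum>p<N. \<Sum>b\<in>(UNIV :: bool set). h p)"
    by (subst sum.cartesian_product) (simp add: case_prod_beta)
  also have "\<dots> = 2 * (\<Sum>p<N. h p)" by (simp add: sum_distrib_left)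
  finally show ?thesis by (simp add: M_def)
qed

lemma ln2_le_sum_inverse:
  assumes "n \<ge> (1::nat)"
  shows "ln 2 \<le> (\<Sum>p\<in>{n..<2*n}. 1 / real p)"
proof -
  have "ln 2 = ln (real (2*n)) - ln (real n)" using assms by (simp add: ln_mult)
  also have "\<dots> = (\<Sum>p\<in>{n..<2*n}. ln (real (Suc p)) - ln (real p))"
    by (rule sum_Suc_diff' [symmetric]) simp
  also have "\<dots> \<le> (\<Sum>p\<in>{n..<2*n}. 1 / real p)"
  proof (rule sum_mono)
    fix p assume "p \<in> {n..<2*n}"
    hence p: "p \<ge> 1" using assms by auto
    have q: "1 + 1 / real p = real (Suc p) / real p" using p by (simp add: field_simps)
    have "ln (real (Suc p)) - ln (real p) = ln (1 + 1 / real p)"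
      unfolding q using p by (subst ln_div) auto
    also have "\<dots> \<le> 1 / real p" by (rule ln_add_one_self_le_self) simp
    finally show "ln (real (Suc p)) - ln (real p) \<le> 1 / real p" .
  qed
  finally show ?thesis .
qed

lemma sum_inverse_adjacent_max_ge:
  assumes "n \<ge> 1" "distinct L" "set L = {..<2*n}"
  shows "2 * ln 2 - 1 / real n \<le> (\<Sum>j<2*n - 1. 1 / real (max (L ! j) (L ! Suc j)))"
proof -
  have len: "length L = 2*n" using assms(2,3) distinct_card by fastforce
  define h where "h p = (if n \<le> p then 1 / real n - 1 / real p else 0)" for p :: nat
  have h_nonneg: "h p \<ge> 0" for p using assms(1) by (auto simp: h_def intro: divide_left_mono)
  have "(\<Sum>p<2*n. h p) = (\<Sum>p\<in>{n..<2*n}. 1 / real n - 1 / real p)"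
    by (rule sum.mono_neutral_cong_right) (auto simp: h_def)
  also have "\<dots> = 1 - (\<Sum>p\<in>{n..<2*n}. 1 / real p)" using assms(1) by (simp add: sum_subtractf)
  finally have "2 * (\<Sum>p<2*n. h p) \<le> 2 - 2 * ln 2" using ln2_le_sum_inverse [OF assms(1)] by simp
  hence "(\<Sum>j<2*n - 1. h (max (L ! j) (L ! Suc j))) \<le> 2 - 2 * ln 2"
    using sum_adjacent_max_le [OF assms(2), of "2*n" h] assms(3) len h_nonneg by simp
  moreover have "real (2*n - 1) / real n = 2 - 1 / real n"
    using assms(1) by (simp add: of_nat_diff field_simps)
  ultimately have "2 * ln 2 - 1 / real n \<le> real (2*n - 1) / real n
      - (\<Sum>j<2*n - 1. h (max (L ! j) (L ! Suc j)))"
    by linarith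
  also have "\<dots> = (\<Sum>j<2*n - 1. 1 / real n - h (max (L ! j) (L ! Suc j)))"
    by (simp add: sum_subtractf)
  also have "\<dots> \<le> (\<Sum>j<2*n - 1. 1 / real (max (L ! j) (L ! Suc j)))"
  proof (rule sum_mono)
    fix j assume "j \<in> {..<2*n - 1}"
    hence "L ! j \<noteq> L ! Suc j" using assms(2) len by (simp add: nth_eq_iff_index_eq)
    hence "max (L ! j) (L ! Suc j) \<ge> 1" by linarith
    thus "1 / real n - h (max (L ! j) (L ! Suc j)) \<le> 1 / real (max (L ! j) (L ! Suc j))"
      by (auto simp: h_def intro!: divide_left_mono)
  qed
  finally show ?thesis .
qed

lemma unit_interval_gaps_bound:
  fixes y :: "nat \<Rightarrow> real"
  assumes "n \<ge> 1" "\<sigma> > 0"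
    and range: "\<And>i. i < 2*n \<Longrightarrow> 0 \<le> y i \<and> y i \<le> 1"
    and gap: "\<And>a b. a < 2*n \<Longrightarrow> b < 2*n \<Longrightarrow> a \<noteq> b \<Longrightarrow>
                1 / (\<sigma> * real (max a b)) - \<delta> \<le> \<bar>y a - y b\<bar>"
  shows "2 * ln 2 - 1 / real n \<le> \<sigma> * (1 + real (2*n - 1) * \<delta>)"
proof -
  define L where "L = sort_key y [0..<2*n]"
  have L: "distinct L" "set L = {..<2*n}" "length L = 2*n" "sorted (map y L)"
    by (auto simp: L_def)
  define M where "M j = max (L ! j) (L ! Suc j)" for j
  have "(\<Sum>j<2*n - 1. 1 / (\<sigma> * real (M j)) - \<delta>) \<le> (\<Sum>j<2*n - 1. y (L ! Suc j) - y (L ! j))"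
  proof (rule sum_mono)
    fix j assume "j \<in> {..<2*n - 1}"
    hence j: "Suc j < length L" using L(3) by simp
    have "L ! j < 2*n" "L ! Suc j < 2*n" using j L(2) nth_mem [of _ L] by auto
    moreover have "L ! j \<noteq> L ! Suc j" using j L(1) by (simp add: nth_eq_iff_index_eq)
    ultimately have "1 / (\<sigma> * real (M j)) - \<delta> \<le> \<bar>y (L ! j) - y (L ! Suc j)\<bar>"
      unfolding M_def by (rule gap)
    moreover have "y (L ! j) \<le> y (L ! Suc j)" using j L(4) by (simp add: sorted_iff_nth_mono)
    ultimately show "1 / (\<sigma> * real (M j)) - \<delta> \<le> y (L ! Suc j) - y (L ! j)" by simp
  qed
  also have "\<dots> = y (L ! (2*n - 1)) - y (L ! 0)" by (rule sum_lessThan_telescope)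
  also have "\<dots> \<le> 1"
  proof -
    have "L ! (2*n - 1) < 2*n" "L ! 0 < 2*n" using L(2,3) assms(1) nth_mem [of _ L] by auto
    thus ?thesis using range [of "L ! (2*n - 1)"] range [of "L ! 0"] by linarith
  qed
  finally have "(\<Sum>j<2*n - 1. 1 / real (M j)) / \<sigma> \<le> 1 + real (2*n - 1) * \<delta>"
    by (simp add: sum_subtractf sum_divide_distrib mult.commute)
  hence "(\<Sum>j<2*n - 1. 1 / real (M j)) \<le> \<sigma> * (1 + real (2*n - 1) * \<delta>)"
    using assms(2) by (simp add: field_simps)
  with sum_inverse_adjacent_max_ge [OF assms(1) L(1,2)] show ?thesis by (simp add: M_def)
qed

definition batch :: "nat \<Rightarrow> dinst" where
  "batch m = replicate m (0, 1)"

lemma length_batch [simp]: "length (batch m) = m"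
  by (simp add: batch_def)

lemma valid_instance_batch: "m \<ge> 1 \<Longrightarrow> valid_instance (batch m)"
  by (auto simp: valid_instance_def batch_def)

lemma present_batch: "present (batch m) i t \<longleftrightarrow> i < m \<and> 0 \<le> t \<and> t \<le> 1"
  by (auto simp: present_def batch_def)

lemma T_end_batch:
  assumes "m \<ge> 1"
  shows "T_end (batch m) = 1"
proof -
  have "set (batch m) = {(0, 1)}" using assms by (cases m) (auto simp: batch_def)
  thus ?thesis by (simp add: T_end_def)
qed

lemma same_info_batch: "i < m \<Longrightarrow> m \<le> N \<Longrightarrow> same_info (batch m) (batch N) i"
  by (auto simp: same_info_def batch_def)

lemma objective_batch_le:
  assumes "a < m" "b < m" "a \<noteq> b"
  shows "objective (batch m) X \<le> ereal (dist (X a) (X b))"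
proof -
  have "objective (batch m) X \<le> dmin (batch m) X 0"
    unfolding objective_def by (rule INF_lower) (use assms in \<open>simp add: T_end_batch\<close>)
  also have "\<dots> \<le> ereal (dist (X (fst (a, b))) (X (snd (a, b))))"
    unfolding dmin_def by (rule INF_lower) (use assms in \<open>auto simp: present_batch\<close>)
  finally show ?thesis by simp
qed

lemma objective_batch_ge:
  assumes "\<And>i j. i < m \<Longrightarrow> j < m \<Longrightarrow> i \<noteq> j \<Longrightarrow> d \<le> dist (X i) (X j)"
  shows "ereal d \<le> objective (batch m) X"
  unfolding objective_def dmin_def
  by (intro INF_greatest) (use assms in \<open>auto simp: present_batch\<close>)

text \<open>An online algorithm cannot tell the first \<open>m\<close> points of \<open>batch m\<close> from those of \<open>batch N\<close>.\<close>

lemma competitive_batch_dist_ge: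
  fixes P :: "'a::euclidean_space set" and Z :: "nat \<Rightarrow> 'a"
  assumes online: "online_alg P A" and comp: "competitive \<sigma> P A"
    and Z: "\<And>i. i < m \<Longrightarrow> Z i \<in> P"
    and Z_dist: "\<And>i j. i < m \<Longrightarrow> j < m \<Longrightarrow> i \<noteq> j \<Longrightarrow> d \<le> dist (Z i) (Z j)"
    and ab: "a < m" "b < m" "a \<noteq> b" and "m \<le> N" and "d > 0"
  shows "d \<le> \<sigma> * dist (A (batch N) a) (A (batch N) b)"
proof -
  define D where "D = dist (A (batch N) a) (A (batch N) b)"
  have valid: "valid_instance (batch m)" "valid_instance (batch N)"
    using ab \<open>m \<le> N\<close> by (auto intro: valid_instance_batch)
  have "ereal d \<le> objective (batch m) Z" by (rule objective_batch_ge) (rule Z_dist)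
  also have "\<dots> \<le> OPT (batch m) P"
    unfolding OPT_def by (rule SUP_upper) (use Z in \<open>auto simp: batch_def\<close>)
  also have "\<dots> \<le> ereal \<sigma> * objective (batch m) (A (batch m))"
    using comp valid by (simp add: competitive_def)
  finally have d_le: "ereal d \<le> ereal \<sigma> * objective (batch m) (A (batch m))" .
  have "A (batch m) a = A (batch N) a" "A (batch m) b = A (batch N) b"
    using online valid same_info_batch ab \<open>m \<le> N\<close> unfolding online_alg_def by blast+
  hence "objective (batch m) (A (batch m)) \<le> ereal D"
    using objective_batch_le [OF ab, of "A (batch m)"] by (simp add: D_def)
  moreover have "ereal 0 \<le> objective (batch m) (A (batch m))" by (rule objective_batch_ge) simp
  ultimately obtain r where r: "objective (batch m) (A (batch m)) = ereal r" "0 \<le> r" "r \<le> D"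
    by (cases "objective (batch m) (A (batch m))") auto
  with d_le have "d \<le> \<sigma> * r" by simp
  with \<open>d > 0\<close> have "0 < \<sigma> * r" by linarith
  with r(2) have "\<sigma> > 0" by (auto simp: zero_less_mult_iff)
  with r(3) have "\<sigma> * r \<le> \<sigma> * D" by simp
  with \<open>d \<le> \<sigma> * r\<close> show ?thesis unfolding D_def by linarith
qed

definition thin_box :: "'k::finite \<Rightarrow> real \<Rightarrow> (real ^ 'k) set" where
  "thin_box i0 \<epsilon> = cbox 0 (\<chi> i. if i = i0 then 1 else \<epsilon>)"

lemma polytope_thin_box: "polytope (thin_box i0 \<epsilon>)"
  by (simp add: thin_box_def polytope_interval)

lemma aff_dim_thin_box:
  fixes i0 :: "'k::finite" and \<epsilon> :: real
  assumes "\<epsilon> > 0"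
  shows "aff_dim (thin_box i0 \<epsilon>) = int CARD('k)"
proof -
  have "(\<chi> i. if i = i0 then 1 else \<epsilon>) /\<^sub>R 2 \<in> box 0 (\<chi> i. if i = i0 then 1 else \<epsilon> :: real ^ 'k)"
    using assms by (simp add: mem_box_cart)
  hence "interior (thin_box i0 \<epsilon>) \<noteq> {}" by (auto simp: thin_box_def interior_cbox)
  thus ?thesis by (simp add: aff_dim_nonempty_interior)
qed

lemma mem_thin_box:
  "x \<in> thin_box i0 \<epsilon> \<longleftrightarrow> (\<forall>i. 0 \<le> x $ i \<and> x $ i \<le> (if i = i0 then 1 else \<epsilon>))"
  by (simp add: thin_box_def mem_box_cart)

lemma dist_thin_box_le:
  fixes i0 :: "'k::finite" and \<epsilon> :: real
  assumes "u \<in> thin_box i0 \<epsilon>" "v \<in> thin_box i0 \<epsilon>" "\<epsilon> \<ge> 0"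
  shows "dist u v \<le> \<bar>u $ i0 - v $ i0\<bar> + real CARD('k) * \<epsilon>"
proof -
  have "dist u v \<le> (\<Sum>i\<in>UNIV. \<bar>(u - v) $ i\<bar>)" unfolding dist_norm by (rule norm_le_l1_cart)
  also have "\<dots> \<le> (\<Sum>i\<in>UNIV. (if i = i0 then \<bar>u $ i0 - v $ i0\<bar> else 0) + \<epsilon>)"
  proof (rule sum_mono)
    fix i
    have "0 \<le> u $ i \<and> u $ i \<le> (if i = i0 then 1 else \<epsilon>)"
      "0 \<le> v $ i \<and> v $ i \<le> (if i = i0 then 1 else \<epsilon>)"
      using assms(1,2) by (simp_all add: mem_thin_box)
    thus "\<bar>(u - v) $ i\<bar> \<le> (if i = i0 then \<bar>u $ i0 - v $ i0\<bar> else 0) + \<epsilon>"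
      using assms(3) by (auto simp: abs_le_iff)
  qed
  also have "\<dots> = \<bar>u $ i0 - v $ i0\<bar> + real CARD('k) * \<epsilon>" by (simp add: sum.distrib)
  finally show ?thesis .
qed

lemma thin_box_batch_dist_ge:
  fixes i0 :: "'k::finite" and \<epsilon> :: real
  assumes "online_alg (thin_box i0 \<epsilon>) A" "competitive \<sigma> (thin_box i0 \<epsilon>) A"
    and "\<epsilon> \<ge> 0" "a < N" "b < N" "a \<noteq> b"
  shows "1 / real (max a b) \<le> \<sigma> * dist (A (batch N) a) (A (batch N) b)"
proof (rule competitive_batch_dist_ge [OF assms(1,2)])
  define Z :: "nat \<Rightarrow> real ^ 'k" where "Z i = (real i / real (max a b)) *\<^sub>R axis i0 1" for i
  have "max a b \<ge> 1" using assms(6) by linarith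
  then show "Z i \<in> thin_box i0 \<epsilon>" if "i < Suc (max a b)" for i
    using that assms(3) by (auto simp: Z_def mem_thin_box axis_def)
  show "1 / real (max a b) \<le> dist (Z i) (Z j)" if "i \<noteq> j" for i j
  proof -
    have "1 \<le> \<bar>real i - real j\<bar>" using that by linarith
    hence "1 / real (max a b) \<le> \<bar>real i - real j\<bar> / real (max a b)"
      by (intro divide_right_mono) auto
    thus ?thesis by (simp add: Z_def dist_norm diff_divide_distrib [symmetric]
        scaleR_diff_left [symmetric] abs_divide)
  qed
qed (use assms(4-6) in auto)

lemma thin_box_competitive_ratio_ge:
  fixes i0 :: "'k::finite" and \<epsilon> :: real
  assumes online: "online_alg (thin_box i0 \<epsilon>) A" and comp: "competitive \<sigma> (thin_box i0 \<epsilon>) A"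
    and "\<epsilon> > 0" "n \<ge> 1"
  shows "2 * ln 2 - 1 / real n \<le> \<sigma> * (1 + real (2*n - 1) * (real CARD('k) * \<epsilon>))"
proof -
  define x where "x = A (batch (2*n))"
  have "\<forall>i < length (batch (2*n)). x i \<in> thin_box i0 \<epsilon>"
    using online valid_instance_batch [of "2*n"] \<open>n \<ge> 1\<close> unfolding online_alg_def x_def by simp
  hence x: "x i \<in> thin_box i0 \<epsilon>" if "i < 2*n" for i using that by simp
  have sep: "1 / real (max a b) \<le> \<sigma> * dist (x a) (x b)" if "a < 2*n" "b < 2*n" "a \<noteq> b" for a b
    unfolding x_def using thin_box_batch_dist_ge [OF online comp] \<open>\<epsilon> > 0\<close> that by simp
  have "0 < \<sigma> * dist (x 0) (x 1)" using sep [of 0 1] \<open>n \<ge> 1\<close> by simp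
  hence "\<sigma> > 0" by (simp add: zero_less_mult_iff)
  show ?thesis
  proof (rule unit_interval_gaps_bound [OF \<open>n \<ge> 1\<close> \<open>\<sigma> > 0\<close>])
    show "0 \<le> x i $ i0 \<and> x i $ i0 \<le> 1" if "i < 2*n" for i
      using x [OF that] unfolding mem_thin_box by (metis (full_types))
    show "1 / (\<sigma> * real (max a b)) - real CARD('k) * \<epsilon> \<le> \<bar>x a $ i0 - x b $ i0\<bar>"
      if "a < 2*n" "b < 2*n" "a \<noteq> b" for a b
    proof -
      have "1 / (\<sigma> * real (max a b)) = (1 / real (max a b)) / \<sigma>" by simp
      also have "\<dots> \<le> (\<sigma> * dist (x a) (x b)) / \<sigma>"
        using sep [OF that] \<open>\<sigma> > 0\<close> by (intro divide_right_mono) auto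
      also have "\<dots> = dist (x a) (x b)" using \<open>\<sigma> > 0\<close> by simp
      finally have "1 / (\<sigma> * real (max a b)) \<le> dist (x a) (x b)" .
      moreover have "dist (x a) (x b) \<le> \<bar>x a $ i0 - x b $ i0\<bar> + real CARD('k) * \<epsilon>"
        using dist_thin_box_le [OF x [OF that(1)] x [OF that(2)]] \<open>\<epsilon> > 0\<close> by simp
      ultimately show ?thesis by linarith
    qed
  qed
qed

theorem theorem9:
  fixes \<sigma> :: real
  assumes "\<sigma> < 2 * ln 2"
  shows "\<not> (\<exists>A :: (real ^ 'k) set \<Rightarrow> dinst \<Rightarrow> nat \<Rightarrow> real ^ 'k.
             \<forall>P. polytope P \<and> aff_dim P = int CARD('k) \<longrightarrow>
                 online_alg P (A P) \<and> competitive \<sigma> P (A P))"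
proof
  assume "\<exists>A :: (real ^ 'k) set \<Rightarrow> dinst \<Rightarrow> nat \<Rightarrow> real ^ 'k.
            \<forall>P. polytope P \<and> aff_dim P = int CARD('k) \<longrightarrow>
                online_alg P (A P) \<and> competitive \<sigma> P (A P)"
  then obtain A :: "(real ^ 'k) set \<Rightarrow> dinst \<Rightarrow> nat \<Rightarrow> real ^ 'k" where
    "\<And>\<epsilon>. \<epsilon> > 0 \<Longrightarrow> online_alg (thin_box undefined \<epsilon>) (A (thin_box undefined \<epsilon>))
              \<and> competitive \<sigma> (thin_box undefined \<epsilon>) (A (thin_box undefined \<epsilon>))"
    using polytope_thin_box aff_dim_thin_box by blast
  hence bound: "2 * ln 2 - 1 / real n \<le> \<sigma> * (1 + real (2*n - 1) * (real CARD('k) * \<epsilon>))"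
    if "\<epsilon> > 0" "n \<ge> 1" for \<epsilon> :: real and n
    using thin_box_competitive_ratio_ge that by blast
  have "2 * ln 2 - 1 / real n \<le> \<sigma>" if "n \<ge> 1" for n
  proof (rule tendsto_le [OF trivial_limit_at_right_real])
    show "((\<lambda>\<epsilon>. \<sigma> * (1 + real (2*n - 1) * (real CARD('k) * \<epsilon>))) \<longlongrightarrow> \<sigma>) (at_right 0)"
      by (auto intro!: tendsto_eq_intros tendsto_ident_at)
    show "\<forall>\<^sub>F \<epsilon> in at_right 0. 2 * ln 2 - 1 / real n
        \<le> \<sigma> * (1 + real (2*n - 1) * (real CARD('k) * \<epsilon>))"
      using eventually_at_right_less by (rule eventually_mono) (use bound that in auto)
  qed (rule tendsto_const)
  hence "2 * ln 2 \<le> \<sigma>"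
    by (intro LIMSEQ_le_const2 [of "\<lambda>n. 2 * ln 2 - 1 / real n"])
       (auto intro!: tendsto_eq_intros lim_1_over_n)
  with assms show False by simp
qed

end
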